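(* Let $H(q,p,t)$, $q,p\in\mathbb{R}^n$, be of class $C^3$ and consider $\dot q_i=\partial H/\partial p_i$, $\dot p_i=-\partial H/\partial q_i$. Fix $h>0$, $t_0$ and $a\in\mathbb{R}$. Given $(\alpha,\beta)\in\mathbb{R}^{2n}$ define $(q,p)$ and then $(Q,P)$ by $$q_i=\alpha_i+\tfrac h2\frac{\partial H}{\partial p_i}(q,\beta,t_0+ah),\qquad p_i=\beta_i-\tfrac h2\frac{\partial H}{\partial q_i}(q,\beta,t_0+ah),$$ $$P_i=p_i-\tfrac h2\frac{\partial H}{\partial q_i}(q,P,t_0+(1-a)h),\qquad Q_i=q_i+\tfrac h2\frac{\partial H}{\partial p_i}(q,P,t_0+(1-a)h),$$ where the equations for $q$ and for $P$ are implicit. (i) On any open set where these implicit equations define $q$ and $P$ as $C^1$ functions, the map $(\alpha,\beta)\mapsto(Q,P)$ is a contact (canonical) transformation: $\sum_i dP_i\wedge dQ_i=\sum_i d\beta_i\wedge d\alpha_i$. (ii) Taking for small $h$ the solutions of the implicit equations near $\alpha$ and $\beta$, and letting $(q(t),p(t))$ be the exact solution with $q(t_0)=\alpha$, $p(t_0)=\beta$, one has $Q-q(t_0+h)=O(h^3)$ and $P-p(t_0+h)=O(h^3)$; i.e. the method is of second order. *)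

theory Defs
  imports "HOL-Analysis.Analysis"
begin

definition C1_on :: "'a::real_normed_vector set \<Rightarrow> ('a \<Rightarrow> 'b::real_normed_vector) \<Rightarrow> bool" where
  "C1_on S f \<longleftrightarrow> (\<exists>f'. (\<forall>x\<in>S. (f has_derivative blinfun_apply (f' x)) (at x)) \<and> continuous_on S f')"

definition C2_on :: "'a::real_normed_vector set \<Rightarrow> ('a \<Rightarrow> 'b::real_normed_vector) \<Rightarrow> bool" where
  "C2_on S f \<longleftrightarrow> (\<exists>f'. (\<forall>x\<in>S. (f has_derivative blinfun_apply (f' x)) (at x)) \<and> C1_on S f')"

definition C3_on :: "'a::real_normed_vector set \<Rightarrow> ('a \<Rightarrow> 'b::real_normed_vector) \<Rightarrow> bool" where
  "C3_on S f \<longleftrightarrow> (\<exists>f'. (\<forall>x\<in>S. (f has_derivative blinfun_apply (f' x)) (at x)) \<and> C2_on S f')"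

definition dHq :: "(real^'n \<Rightarrow> real^'n \<Rightarrow> real \<Rightarrow> real) \<Rightarrow> real^'n \<Rightarrow> real^'n \<Rightarrow> real \<Rightarrow> real^'n" where
  "dHq H q p t = (\<chi> i. deriv (\<lambda>s. H (q + s *\<^sub>R axis i 1) p t) 0)"

definition dHp :: "(real^'n \<Rightarrow> real^'n \<Rightarrow> real \<Rightarrow> real) \<Rightarrow> real^'n \<Rightarrow> real^'n \<Rightarrow> real \<Rightarrow> real^'n" where
  "dHp H q p t = (\<chi> i. deriv (\<lambda>s. H q (p + s *\<^sub>R axis i 1) t) 0)"

text \<open>The 2-form \<Sum>_i dy_i \<and> dx_i on pairs (x,y), evaluated on tangent vectors u, v.\<close>

definition omega2 :: "(real^'n) \<times> (real^'n) \<Rightarrow> (real^'n) \<times> (real^'n) \<Rightarrow> real" where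
  "omega2 u v = (\<Sum>i\<in>UNIV. snd u $ i * fst v $ i - snd v $ i * fst u $ i)"

definition canonical_on :: "((real^'n) \<times> (real^'n)) set \<Rightarrow> ((real^'n) \<times> (real^'n) \<Rightarrow> (real^'n) \<times> (real^'n)) \<Rightarrow> bool" where
  "canonical_on U \<Phi> \<longleftrightarrow> (\<forall>z\<in>U. \<exists>D. (\<Phi> has_derivative D) (at z) \<and>
      (\<forall>u v. omega2 (D u) (D v) = omega2 u v))"

definition q_eq where
  "q_eq H h t0 a \<alpha> \<beta> q \<longleftrightarrow> q = \<alpha> + (h/2) *\<^sub>R dHp H q \<beta> (t0 + a*h)"

definition p_of where
  "p_of H h t0 a \<beta> q = \<beta> - (h/2) *\<^sub>R dHq H q \<beta> (t0 + a*h)"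

definition P_eq where
  "P_eq H h t0 a \<beta> q P \<longleftrightarrow> P = p_of H h t0 a \<beta> q - (h/2) *\<^sub>R dHq H q P (t0 + (1-a)*h)"

definition Q_of where
  "Q_of H h t0 a q P = q + (h/2) *\<^sub>R dHp H q P (t0 + (1-a)*h)"

end

theory Submission
  imports Defs
begin

(*
  Write F = (\<partial>H/\<partial>p, -\<partial>H/\<partial>q) for the Hamiltonian vector field, as a function of (q, p, t).
  The scheme is the composition of two symplectic Euler steps, (\<alpha>, \<beta>) \<mapsto> (q, p) with q implicit
  and (q, p) \<mapsto> (Q, P) with P implicit. Differentiating the implicit equations shows that each
  linearised step preserves \<Sum>\<^sub>i dy\<^sub>i \<and> dx\<^sub>i because the Hessian of H is symmetric; hence so does
  their composition.

  For the order, let x0 = (\<alpha>, \<beta>, t0) and w = (F x0, 1). The exact solution advances by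
  h F x0 + h\<^sup>2/2 DF(x0) w + O(h\<^sup>3), by Taylor expansion along the flow. The scheme advances by
  h/2 (F x1 + F x2) for the stage points x1 = (q, \<beta>, t0 + a h) and x2 = (q, P, t0 + (1 - a) h);
  since x1 + x2 - 2 x0 = h w + O(h\<^sup>2), expanding F around x0 gives the same increment up to
  O(h\<^sup>3). For small h the implicit equations have solutions near (\<alpha>, \<beta>) by Brouwer's fixed
  point theorem.
*)

type_synonym 'n phase_time = "(real^'n) \<times> (real^'n) \<times> real"

lemma bounded_linear_vec_lambda:
  fixes f :: "'i::finite \<Rightarrow> 'a::real_normed_vector \<Rightarrow> real"
  assumes "\<And>i. bounded_linear (f i)"
  shows "bounded_linear (\<lambda>x. \<chi> i. f i x)"
proof -
  obtain K where K: "\<And>i x. norm (f i x) \<le> norm x * K i"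
    using bounded_linear.bounded[OF assms] by metis
  have lin: "\<And>i. linear (f i)" using assms bounded_linear.linear by blast
  show ?thesis
  proof (rule bounded_linear_intro[where K="\<Sum>i\<in>UNIV. K i"])
    show "(\<chi> i. f i (x + y)) = (\<chi> i. f i x) + (\<chi> i. f i y)" for x y
      by (simp add: vec_eq_iff linear_add[OF lin])
    show "(\<chi> i. f i (r *\<^sub>R x)) = r *\<^sub>R (\<chi> i. f i x)" for r x
      by (simp add: vec_eq_iff linear_scale[OF lin])
    show "norm (\<chi> i. f i x) \<le> norm x * (\<Sum>i\<in>UNIV. K i)" for x
    proof -
      have "norm (\<chi> i. f i x) \<le> (\<Sum>i\<in>UNIV. norm (f i x))"
        using norm_le_l1_cart[of "\<chi> i. f i x"] by simp
      also have "\<dots> \<le> (\<Sum>i\<in>UNIV. norm x * K i)" by (intro sum_mono K)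
      finally show ?thesis by (simp add: sum_distrib_left)
    qed
  qed
qed

lemma linear_eq_inner_axis:
  fixes l :: "real^'n \<Rightarrow> real"
  assumes "linear l"
  shows "(\<chi> i. l (axis i 1)) \<bullet> y = l y"
proof -
  have "l y = l (\<Sum>i\<in>UNIV. y $ i *\<^sub>R axis i 1)"
    using basis_expansion[of y] by (simp add: scalar_mult_eq_scaleR)
  also have "\<dots> = (\<Sum>i\<in>UNIV. y $ i * l (axis i 1))"
    by (simp add: linear_sum[OF assms] linear_scale[OF assms])
  finally show ?thesis by (simp add: inner_vec_def mult.commute)
qed

definition p_gradient :: "('n::finite phase_time \<Rightarrow>\<^sub>L real) \<Rightarrow> real^'n" where
  "p_gradient A = (\<chi> i. A (0, axis i 1, 0))"

definition q_gradient :: "('n::finite phase_time \<Rightarrow>\<^sub>L real) \<Rightarrow> real^'n" where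
  "q_gradient A = (\<chi> i. A (axis i 1, 0, 0))"

lemma bounded_linear_p_gradient: "bounded_linear p_gradient"
  unfolding p_gradient_def[abs_def] by (intro bounded_linear_vec_lambda bounded_linear_apply_blinfun)

lemma bounded_linear_q_gradient: "bounded_linear q_gradient"
  unfolding q_gradient_def[abs_def] by (intro bounded_linear_vec_lambda bounded_linear_apply_blinfun)

lemma inner_p_gradient: "p_gradient A \<bullet> y = A (0, y, 0)"
proof -
  have "linear (\<lambda>y. A (0, y, 0))"
    by (intro bounded_linear.linear bounded_linear_blinfun_apply bounded_linear_Pair
        bounded_linear_zero bounded_linear_ident)
  then show ?thesis unfolding p_gradient_def by (rule linear_eq_inner_axis)
qed

lemma inner_q_gradient: "q_gradient A \<bullet> y = A (y, 0, 0)"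
proof -
  have "linear (\<lambda>y. A (y, 0, 0))"
    by (intro bounded_linear.linear bounded_linear_blinfun_apply bounded_linear_Pair
        bounded_linear_zero bounded_linear_ident)
  then show ?thesis unfolding q_gradient_def by (rule linear_eq_inner_axis)
qed

lemma deriv_along_line:
  fixes f :: "'a::real_normed_vector \<Rightarrow> real"
  assumes "(f has_derivative f') (at x)"
  shows "deriv (\<lambda>s. f (x + s *\<^sub>R v)) 0 = f' v"
proof -
  have "((\<lambda>s. x + s *\<^sub>R v) has_derivative (\<lambda>s. s *\<^sub>R v)) (at 0)"
    by (auto intro!: derivative_eq_intros)
  from has_derivative_compose[OF this] assms
  have "((\<lambda>s. f (x + s *\<^sub>R v)) has_derivative (\<lambda>s. f' (s *\<^sub>R v))) (at 0)" by simp
  moreover have "f' (s *\<^sub>R v) = f' v * s" for s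
    using linear_scale[OF has_derivative_linear[OF assms]] by simp
  ultimately show ?thesis
    by (intro DERIV_imp_deriv) (simp add: has_field_derivative_def)
qed

lemma dHp_eq_p_gradient:
  assumes "((\<lambda>(q, p, t). H q p t) has_derivative blinfun_apply A) (at (q, p, t))"
  shows "dHp H q p t = p_gradient A"
proof -
  have "deriv (\<lambda>s. H q (p + s *\<^sub>R axis i 1) t) 0 = A (0, axis i 1, 0)" for i
    using deriv_along_line[OF assms, of "(0, axis i 1, 0)"] by simp
  then show ?thesis by (simp add: dHp_def p_gradient_def)
qed

lemma dHq_eq_q_gradient:
  assumes "((\<lambda>(q, p, t). H q p t) has_derivative blinfun_apply A) (at (q, p, t))"
  shows "dHq H q p t = q_gradient A"
proof -
  have "deriv (\<lambda>s. H (q + s *\<^sub>R axis i 1) p t) 0 = A (axis i 1, 0, 0)" for i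
    using deriv_along_line[OF assms, of "(axis i 1, 0, 0)"] by simp
  then show ?thesis by (simp add: dHq_def q_gradient_def)
qed

definition hamiltonian_field :: "('n::finite phase_time \<Rightarrow>\<^sub>L real) \<Rightarrow> (real^'n) \<times> (real^'n)" where
  "hamiltonian_field A = (p_gradient A, - q_gradient A)"

lemma bounded_linear_hamiltonian_field: "bounded_linear hamiltonian_field"
  unfolding hamiltonian_field_def[abs_def]
  by (intro bounded_linear_Pair bounded_linear_p_gradient bounded_linear_minus bounded_linear_q_gradient)

section \<open>Symmetry of second derivatives\<close>

lemma onorm_blinfun_apply_diff: "onorm (blinfun_apply A - blinfun_apply B) = norm (A - B)"
  by (simp add: norm_blinfun.rep_eq minus_blinfun.rep_eq fun_diff_def)

lemma has_derivative_linearization_convex: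
  fixes g :: "'a::real_normed_vector \<Rightarrow> 'b::real_normed_vector"
  assumes "convex S" "x \<in> S" "y \<in> S" "x0 \<in> S"
    and "\<And>w. w \<in> S \<Longrightarrow> (g has_derivative blinfun_apply (g' w)) (at w)"
    and "\<And>w. w \<in> S \<Longrightarrow> norm (g' w - g' x0) \<le> B"
  shows "norm (g y - g x - g' x0 (y - x)) \<le> norm (y - x) * B"
proof (rule differentiable_bound_linearization[where S=S and f'="\<lambda>w. blinfun_apply (g' w)"])
  show "x + t *\<^sub>R (y - x) \<in> S" if "t \<in> {0..1}" for t
  proof -
    have "x + t *\<^sub>R (y - x) = (1 - t) *\<^sub>R x + t *\<^sub>R y" by (simp add: algebra_simps)
    then show ?thesis using assms(1-3) that by (simp add: convex_def)
  qed
  show "onorm (blinfun_apply (g' w) - blinfun_apply (g' x0)) \<le> B" if "w \<in> S" for w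
    using assms(6)[OF that] by (simp add: onorm_blinfun_apply_diff)
qed (use assms in \<open>auto intro: has_derivative_at_withinI\<close>)

lemma first_difference_linearization:
  fixes f :: "'a::real_normed_vector \<Rightarrow> real"
  assumes d1: "\<And>y. (f has_derivative blinfun_apply (f' y)) (at y)"
    and d2: "\<And>y. (f' has_derivative blinfun_apply (f'' y)) (at y)"
    and close: "\<And>y. y \<in> ball x d \<Longrightarrow> norm (f'' y - f'' x) \<le> e"
    and p: "norm p < d / 2" and r: "norm r < d / 2"
  shows "\<bar>f (x + p + r) - f (x + p) - f (x + r) + f x - (f' (x + r) - f' x) p\<bar> \<le> 2 * norm p * norm r * e"
proof -
  define g where "g w = f (w + r) - f w" for w
  define g' where "g' w = f' (w + r) - f' w" for w
  have "((\<lambda>w. f (w + r)) has_derivative blinfun_apply (f' (w + r))) (at w)" for w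
    using has_derivative_compose[OF has_derivative_add[OF has_derivative_ident has_derivative_const] d1]
    by simp
  then have g_deriv: "(g has_derivative blinfun_apply (g' w)) (at w)" for w
    unfolding g_def g'_def minus_blinfun.rep_eq by (intro has_derivative_diff d1)
  have "d > 0" using r norm_ge_zero[of r] by linarith
  have lin: "norm (f' b - f' a - f'' x (b - a)) \<le> norm (b - a) * e" if "a \<in> ball x d" "b \<in> ball x d" for a b
    by (rule has_derivative_linearization_convex[where S="ball x d"]) (use that d2 close \<open>d > 0\<close> in auto)
  have "norm (g' w - g' x) \<le> 2 * norm r * e" if "w \<in> ball x (d/2)" for w
  proof -
    have "w \<in> ball x d" "w + r \<in> ball x d" "x \<in> ball x d" "x + r \<in> ball x d"
      using that r \<open>d > 0\<close> norm_triangle_ineq[of "w - x" r]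
      by (auto simp: dist_norm norm_minus_commute algebra_simps)
    have "norm (g' w - g' x) = norm ((f' (w + r) - f' w - f'' x r) - (f' (x + r) - f' x - f'' x r))"
      by (simp add: g'_def)
    also have "\<dots> \<le> norm (f' (w + r) - f' w - f'' x r) + norm (f' (x + r) - f' x - f'' x r)"
      by (rule norm_triangle_ineq4)
    also have "\<dots> \<le> norm r * e + norm r * e"
      using lin[of w "w + r"] lin[of x "x + r"] \<open>w \<in> ball x d\<close> \<open>w + r \<in> ball x d\<close> \<open>x \<in> ball x d\<close>
        \<open>x + r \<in> ball x d\<close> by (intro add_mono) simp_all
    finally show ?thesis by (simp add: mult_ac)
  qed
  then have "norm (g (x + p) - g x - g' x ((x + p) - x)) \<le> norm ((x + p) - x) * (2 * norm r * e)"
    using p \<open>d > 0\<close> by (intro has_derivative_linearization_convex[where S="ball x (d/2)", OF _ _ _ _ g_deriv])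
      (auto simp: dist_norm)
  then show ?thesis by (simp add: g_def g'_def algebra_simps)
qed

lemma second_difference_estimate:
  fixes f :: "'a::real_normed_vector \<Rightarrow> real"
  assumes d1: "\<And>y. (f has_derivative blinfun_apply (f' y)) (at y)"
    and d2: "\<And>y. (f' has_derivative blinfun_apply (f'' y)) (at y)"
    and close: "\<And>y. y \<in> ball x d \<Longrightarrow> norm (f'' y - f'' x) \<le> e"
    and p: "norm p < d / 2" and r: "norm r < d / 2"
  shows "\<bar>f (x + p + r) - f (x + p) - f (x + r) + f x - f'' x r p\<bar> \<le> 3 * norm p * norm r * e"
proof -
  have "d > 0" using r norm_ge_zero[of r] by linarith
  then have "x \<in> ball x d" "x + r \<in> ball x d" using r by (auto simp: dist_norm)
  then have "norm (f' (x + r) - f' x - f'' x (x + r - x)) \<le> norm (x + r - x) * e"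
    by (intro has_derivative_linearization_convex[where S="ball x d"]) (use d2 close in auto)
  then have "\<bar>(f' (x + r) - f' x - f'' x r) p\<bar> \<le> norm r * e * norm p"
    using norm_blinfun[of "f' (x + r) - f' x - f'' x r" p] by (simp add: mult_right_mono order_trans)
  then show ?thesis
    using first_difference_linearization[OF d1 d2 close p r] by (simp add: blinfun.diff_left) argo
qed

lemma second_derivative_asymmetry_le:
  fixes f :: "'a::real_normed_vector \<Rightarrow> real"
  assumes d1: "\<And>y. (f has_derivative blinfun_apply (f' y)) (at y)"
    and d2: "\<And>y. (f' has_derivative blinfun_apply (f'' y)) (at y)"
    and "d > 0" and close: "\<And>y. y \<in> ball x d \<Longrightarrow> norm (f'' y - f'' x) \<le> e"
  shows "\<bar>f'' x u v - f'' x v u\<bar> \<le> 6 * norm u * norm v * e"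
proof -
  define s where "s = d / (2 * (norm u + norm v + 1))"
  have "norm u + norm v + 1 > 0" by (simp add: add_nonneg_pos)
  then have "s > 0" "s * (norm u + norm v + 1) = d / 2"
    using \<open>d > 0\<close> by (simp_all add: s_def field_simps)
  then have "s > 0" "s * norm u + s * norm v + s = d / 2" by (simp_all add: algebra_simps)
  moreover have "s * norm u \<ge> 0" "s * norm v \<ge> 0" using \<open>s > 0\<close> by simp_all
  moreover have "norm (s *\<^sub>R u) = s * norm u" "norm (s *\<^sub>R v) = s * norm v"
    using \<open>s > 0\<close> by simp_all
  ultimately have small: "norm (s *\<^sub>R u) < d / 2" "norm (s *\<^sub>R v) < d / 2" by linarith+
  have scale: "f'' x (s *\<^sub>R a) (s *\<^sub>R b) = s\<^sup>2 * f'' x a b" for a b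
    by (simp add: blinfun.scaleR_left blinfun.scaleR_right power2_eq_square)
  \<comment> \<open>The second difference \<open>W\<close> is symmetric in \<open>u\<close> and \<open>v\<close>, and both mixed derivatives approximate it.\<close>
  define W where "W = f (x + s *\<^sub>R u + s *\<^sub>R v) - f (x + s *\<^sub>R u) - f (x + s *\<^sub>R v) + f x"
  have comm: "x + s *\<^sub>R v + s *\<^sub>R u = x + s *\<^sub>R u + s *\<^sub>R v" by (simp add: algebra_simps)
  have "\<bar>W - s\<^sup>2 * f'' x v u\<bar> \<le> 3 * s\<^sup>2 * norm u * norm v * e"
    using second_difference_estimate[OF d1 d2 close small] \<open>s > 0\<close>
    by (simp add: W_def scale power2_eq_square mult_ac)
  moreover have "\<bar>W - s\<^sup>2 * f'' x u v\<bar> \<le> 3 * s\<^sup>2 * norm u * norm v * e"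
    using second_difference_estimate[OF d1 d2 close small(2,1)] \<open>s > 0\<close>
    by (simp add: W_def comm scale power2_eq_square mult_ac)
  ultimately have "\<bar>s\<^sup>2 * f'' x u v - s\<^sup>2 * f'' x v u\<bar> \<le> 2 * (3 * s\<^sup>2 * norm u * norm v * e)"
    unfolding abs_le_iff by linarith
  then have "s\<^sup>2 * \<bar>f'' x u v - f'' x v u\<bar> \<le> s\<^sup>2 * (6 * norm u * norm v * e)"
    by (simp add: abs_mult right_diff_distrib[symmetric] mult_ac)
  then show ?thesis using \<open>s > 0\<close> by simp
qed

lemma second_derivative_symmetric:
  fixes f :: "'a::real_normed_vector \<Rightarrow> real"
  assumes d1: "\<And>y. (f has_derivative blinfun_apply (f' y)) (at y)"
    and d2: "\<And>y. (f' has_derivative blinfun_apply (f'' y)) (at y)"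
    and "continuous (at x) f''"
  shows "f'' x u v = f'' x v u"
proof -
  have "\<bar>f'' x u v - f'' x v u\<bar> \<le> 0 + e" if "e > 0" for e
  proof -
    define k where "k = 6 * norm u * norm v + 1"
    have "k > 0" by (simp add: k_def add_nonneg_pos)
    with \<open>e > 0\<close> obtain d where "d > 0" and close: "\<And>y. dist y x < d \<Longrightarrow> dist (f'' y) (f'' x) < e / k"
      using assms(3) unfolding continuous_at_eps_delta by (metis divide_pos_pos)
    have "\<bar>f'' x u v - f'' x v u\<bar> \<le> 6 * norm u * norm v * (e / k)"
      by (rule second_derivative_asymmetry_le[OF d1 d2 \<open>d > 0\<close>])
         (use close in \<open>simp add: dist_norm norm_minus_commute less_imp_le\<close>)
    also have "\<dots> \<le> e" using \<open>k > 0\<close> \<open>e > 0\<close> by (simp add: k_def field_simps)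
    finally show ?thesis by simp
  qed
  then show ?thesis using field_le_epsilon[of "\<bar>f'' x u v - f'' x v u\<bar>" 0] by simp
qed

section \<open>The scheme is canonical\<close>

lemma omega2_eq_inner: "omega2 u v = snd u \<bullet> fst v - snd v \<bullet> fst u"
  by (simp add: omega2_def inner_vec_def sum_subtractf)

lemma blinfun_apply_split_qp:
  fixes S :: "'n::finite phase_time \<Rightarrow>\<^sub>L real"
  shows "S (x, y, 0) = S (x, 0, 0) + S (0, y, 0)"
proof -
  have "(x, y, 0::real) = (x, 0, 0) + (0, y, 0)" by simp
  then show ?thesis by (metis blinfun.add_right)
qed

lemma symplectic_euler_q_implicit_linear:
  fixes S :: "'n::finite phase_time \<Rightarrow>\<^sub>L ('n phase_time \<Rightarrow>\<^sub>L real)"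
  assumes sym: "\<And>w v. S w v = S v w"
    and xu: "xu' = xu + c *\<^sub>R p_gradient (S (xu', yu, 0))"
    and yu: "yu' = yu - c *\<^sub>R q_gradient (S (xu', yu, 0))"
    and xv: "xv' = xv + c *\<^sub>R p_gradient (S (xv', yv, 0))"
    and yv: "yv' = yv - c *\<^sub>R q_gradient (S (xv', yv, 0))"
  shows "yu' \<bullet> xv' - yv' \<bullet> xu' = yu \<bullet> xv - yv \<bullet> xu"
proof -
  have "yu' \<bullet> xv' = yu \<bullet> xv' - c * S (xu', yu, 0) (xv', 0, 0)"
    by (subst yu) (simp add: inner_diff_left inner_q_gradient)
  moreover have "yu \<bullet> xv' = yu \<bullet> xv + c * S (xv', yv, 0) (0, yu, 0)"
    by (subst xv) (simp add: inner_add_right inner_commute[of yu] inner_p_gradient)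
  moreover have "yv' \<bullet> xu' = yv \<bullet> xu' - c * S (xv', yv, 0) (xu', 0, 0)"
    by (subst yv) (simp add: inner_diff_left inner_q_gradient)
  moreover have "yv \<bullet> xu' = yv \<bullet> xu + c * S (xu', yu, 0) (0, yv, 0)"
    by (subst xu) (simp add: inner_add_right inner_commute[of yv] inner_p_gradient)
  moreover have "c * S (xv', yv, 0) (xu', 0, 0) + c * S (xv', yv, 0) (0, yu, 0)
      = c * S (xu', yu, 0) (xv', 0, 0) + c * S (xu', yu, 0) (0, yv, 0)"
    using sym[of "(xv', yv, 0)" "(xu', yu, 0)"] blinfun_apply_split_qp[of "S (xv', yv, 0)" xu' yu]
      blinfun_apply_split_qp[of "S (xu', yu, 0)" xv' yv]
    by (simp add: distrib_left[symmetric])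
  ultimately show ?thesis by linarith
qed

lemma symplectic_euler_p_implicit_linear:
  fixes S :: "'n::finite phase_time \<Rightarrow>\<^sub>L ('n phase_time \<Rightarrow>\<^sub>L real)"
  assumes sym: "\<And>w v. S w v = S v w"
    and yu: "yu' = yu - c *\<^sub>R q_gradient (S (xu, yu', 0))"
    and xu: "xu' = xu + c *\<^sub>R p_gradient (S (xu, yu', 0))"
    and yv: "yv' = yv - c *\<^sub>R q_gradient (S (xv, yv', 0))"
    and xv: "xv' = xv + c *\<^sub>R p_gradient (S (xv, yv', 0))"
  shows "yu' \<bullet> xv' - yv' \<bullet> xu' = yu \<bullet> xv - yv \<bullet> xu"
proof -
  have "yu' \<bullet> xv' = yu' \<bullet> xv + c * S (xv, yv', 0) (0, yu', 0)"
    by (subst xv) (simp add: inner_add_right inner_commute[of yu'] inner_p_gradient)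
  moreover have "yu' \<bullet> xv = yu \<bullet> xv - c * S (xu, yu', 0) (xv, 0, 0)"
    by (subst yu) (simp add: inner_diff_left inner_q_gradient)
  moreover have "yv' \<bullet> xu' = yv' \<bullet> xu + c * S (xu, yu', 0) (0, yv', 0)"
    by (subst xu) (simp add: inner_add_right inner_commute[of yv'] inner_p_gradient)
  moreover have "yv' \<bullet> xu = yv \<bullet> xu - c * S (xv, yv', 0) (xu, 0, 0)"
    by (subst yv) (simp add: inner_diff_left inner_q_gradient)
  moreover have "c * S (xv, yv', 0) (xu, 0, 0) + c * S (xv, yv', 0) (0, yu', 0)
      = c * S (xu, yu', 0) (xv, 0, 0) + c * S (xu, yu', 0) (0, yv', 0)"
    using sym[of "(xv, yv', 0)" "(xu, yu', 0)"] blinfun_apply_split_qp[of "S (xv, yv', 0)" xu yu']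
      blinfun_apply_split_qp[of "S (xu, yu', 0)" xv yv']
    by (simp add: distrib_left[symmetric])
  ultimately show ?thesis by linarith
qed

lemma has_derivative_eq_on_open:
  assumes "(f has_derivative f') (at z)" "(g has_derivative g') (at z)"
    and "open U" "z \<in> U" "\<And>y. y \<in> U \<Longrightarrow> f y = g y"
  shows "f' = g'"
proof -
  have "(f has_derivative g') (at z)"
    by (rule has_derivative_transform_within_open[OF assms(2) assms(3,4)]) (simp add: assms(5))
  with assms(1) show ?thesis by (rule has_derivative_unique)
qed

lemma has_derivative_gradient_at_qp:
  fixes H' :: "'n::finite phase_time \<Rightarrow> 'n phase_time \<Rightarrow>\<^sub>L real"
  assumes "\<And>y. (H' has_derivative blinfun_apply (H'' y)) (at y)"
    and "(A has_derivative A') (at z)" "(B has_derivative B') (at z)"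
  shows "((\<lambda>z. H' (A z, B z, t)) has_derivative (\<lambda>u. H'' (A z, B z, t) (A' u, B' u, 0))) (at z)"
proof -
  have "((\<lambda>z. (A z, B z, t)) has_derivative (\<lambda>u. (A' u, B' u, 0))) (at z)"
    by (intro has_derivative_Pair assms(2,3) has_derivative_const)
  from has_derivative_compose[OF this assms(1)] show ?thesis .
qed

lemma implicit_scheme_linearization:
  fixes H' :: "'n::finite phase_time \<Rightarrow> 'n phase_time \<Rightarrow>\<^sub>L real"
  assumes H'_deriv: "\<And>y. (H' has_derivative blinfun_apply (H'' y)) (at y)"
    and "open U" "z \<in> U"
    and dq: "(qf has_derivative dq) (at z)" and dP: "(Pf has_derivative dP) (at z)"
    and qf_eq: "\<And>z. z \<in> U \<Longrightarrow> qf z = fst z + c *\<^sub>R p_gradient (H' (qf z, snd z, t1))"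
    and Pf_eq: "\<And>z. z \<in> U \<Longrightarrow>
      Pf z = snd z - c *\<^sub>R q_gradient (H' (qf z, snd z, t1)) - c *\<^sub>R q_gradient (H' (qf z, Pf z, t2))"
  shows "dq u = fst u + c *\<^sub>R p_gradient (H'' (qf z, snd z, t1) (dq u, snd u, 0))"
    and "dP u = snd u - c *\<^sub>R q_gradient (H'' (qf z, snd z, t1) (dq u, snd u, 0))
                     - c *\<^sub>R q_gradient (H'' (qf z, Pf z, t2) (dq u, dP u, 0))"
proof -
  note p_grad = bounded_linear.has_derivative[OF bounded_linear_p_gradient]
  note q_grad = bounded_linear.has_derivative[OF bounded_linear_q_gradient]
  note H'_at = has_derivative_gradient_at_qp[OF H'_deriv]
  have fst_deriv: "(fst has_derivative fst) (at z)" and snd_deriv: "(snd has_derivative snd) (at z)"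
    by (auto intro: has_derivative_fst has_derivative_snd has_derivative_ident)
  have "dq = (\<lambda>u. fst u + c *\<^sub>R p_gradient (H'' (qf z, snd z, t1) (dq u, snd u, 0)))"
    by (rule has_derivative_eq_on_open[OF dq _ \<open>open U\<close> \<open>z \<in> U\<close> qf_eq])
       (intro has_derivative_add fst_deriv has_derivative_scaleR_right p_grad H'_at dq snd_deriv)
  then show "dq u = fst u + c *\<^sub>R p_gradient (H'' (qf z, snd z, t1) (dq u, snd u, 0))" by metis
  have "dP = (\<lambda>u. snd u - c *\<^sub>R q_gradient (H'' (qf z, snd z, t1) (dq u, snd u, 0))
                     - c *\<^sub>R q_gradient (H'' (qf z, Pf z, t2) (dq u, dP u, 0)))"
    by (rule has_derivative_eq_on_open[OF dP _ \<open>open U\<close> \<open>z \<in> U\<close> Pf_eq])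
       (intro has_derivative_diff snd_deriv has_derivative_scaleR_right q_grad H'_at dq dP)
  then show "dP u = snd u - c *\<^sub>R q_gradient (H'' (qf z, snd z, t1) (dq u, snd u, 0))
                     - c *\<^sub>R q_gradient (H'' (qf z, Pf z, t2) (dq u, dP u, 0))" by metis
qed

lemma canonical_on_implicit_scheme:
  fixes H' :: "'n::finite phase_time \<Rightarrow> 'n phase_time \<Rightarrow>\<^sub>L real"
  assumes H'_deriv: "\<And>y. (H' has_derivative blinfun_apply (H'' y)) (at y)"
    and H''_sym: "\<And>y w v. H'' y w v = H'' y v w"
    and "open U"
    and qf_diff: "\<And>z. z \<in> U \<Longrightarrow> qf differentiable (at z)"
    and Pf_diff: "\<And>z. z \<in> U \<Longrightarrow> Pf differentiable (at z)"
    and qf_eq: "\<And>z. z \<in> U \<Longrightarrow> qf z = fst z + c *\<^sub>R p_gradient (H' (qf z, snd z, t1))"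
    and Pf_eq: "\<And>z. z \<in> U \<Longrightarrow>
      Pf z = snd z - c *\<^sub>R q_gradient (H' (qf z, snd z, t1)) - c *\<^sub>R q_gradient (H' (qf z, Pf z, t2))"
  shows "canonical_on U (\<lambda>z. (qf z + c *\<^sub>R p_gradient (H' (qf z, Pf z, t2)), Pf z))"
  unfolding canonical_on_def
proof
  fix z assume "z \<in> U"
  obtain dq dP where dq: "(qf has_derivative dq) (at z)" and dP: "(Pf has_derivative dP) (at z)"
    using qf_diff[OF \<open>z \<in> U\<close>] Pf_diff[OF \<open>z \<in> U\<close>] unfolding differentiable_def by blast
  define S1 S2 where "S1 = H'' (qf z, snd z, t1)" and "S2 = H'' (qf z, Pf z, t2)"
  define dp where "dp u = snd u - c *\<^sub>R q_gradient (S1 (dq u, snd u, 0))" for u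
  define D where "D u = (dq u + c *\<^sub>R p_gradient (S2 (dq u, dP u, 0)), dP u)" for u
  have S1_sym: "S1 w v = S1 v w" and S2_sym: "S2 w v = S2 v w" for w v
    unfolding S1_def S2_def by (rule H''_sym)+
  note linearization = implicit_scheme_linearization[OF H'_deriv \<open>open U\<close> \<open>z \<in> U\<close> dq dP qf_eq Pf_eq,
      folded S1_def S2_def]
  have dq_eq: "dq u = fst u + c *\<^sub>R p_gradient (S1 (dq u, snd u, 0))"
    and dP_eq: "dP u = dp u - c *\<^sub>R q_gradient (S2 (dq u, dP u, 0))" for u
    using linearization by (simp_all add: dp_def)
  have "((\<lambda>z. (qf z + c *\<^sub>R p_gradient (H' (qf z, Pf z, t2)), Pf z)) has_derivative D) (at z)"
    unfolding D_def S2_def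
    by (intro has_derivative_Pair has_derivative_add dq dP has_derivative_scaleR_right
        bounded_linear.has_derivative[OF bounded_linear_p_gradient] has_derivative_gradient_at_qp[OF H'_deriv])
  moreover have "omega2 (D u) (D v) = omega2 u v" for u v
  proof -
    have "omega2 (D u) (D v) = dp u \<bullet> dq v - dp v \<bullet> dq u"
      unfolding omega2_eq_inner D_def fst_conv snd_conv
      by (rule symplectic_euler_p_implicit_linear[OF S2_sym dP_eq refl dP_eq refl])
    also have "\<dots> = omega2 u v"
      unfolding omega2_eq_inner
      by (rule symplectic_euler_q_implicit_linear[OF S1_sym dq_eq dp_def dq_eq dp_def])
    finally show ?thesis .
  qed
  ultimately show "\<exists>D. ((\<lambda>z. (qf z + c *\<^sub>R p_gradient (H' (qf z, Pf z, t2)), Pf z)) has_derivative D) (at z)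
            \<and> (\<forall>u v. omega2 (D u) (D v) = omega2 u v)" by blast
qed

lemma scheme_canonical_on:
  fixes H :: "real^'n::finite \<Rightarrow> real^'n \<Rightarrow> real \<Rightarrow> real"
  assumes H_deriv: "\<And>y. ((\<lambda>(q, p, t). H q p t) has_derivative blinfun_apply (H' y)) (at y)"
    and H'_deriv: "\<And>y. (H' has_derivative blinfun_apply (H'' y)) (at y)"
    and H''_sym: "\<And>y w v. H'' y w v = H'' y v w"
    and "open U" "C1_on U qf" "C1_on U Pf"
    and eqs: "\<forall>z\<in>U. q_eq H h t0 a (fst z) (snd z) (qf z) \<and> P_eq H h t0 a (snd z) (qf z) (Pf z)"
  shows "canonical_on U (\<lambda>z. (Q_of H h t0 a (qf z) (Pf z), Pf z))"
proof -
  have dH: "dHp H q p t = p_gradient (H' (q, p, t))" "dHq H q p t = q_gradient (H' (q, p, t))" for q p t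
    using dHp_eq_p_gradient dHq_eq_q_gradient H_deriv by blast+
  have "qf differentiable (at z)" "Pf differentiable (at z)" if "z \<in> U" for z
    using \<open>C1_on U qf\<close> \<open>C1_on U Pf\<close> that unfolding C1_on_def differentiable_def by blast+
  then show ?thesis
    unfolding Q_of_def dH
    by (rule canonical_on_implicit_scheme[OF H'_deriv H''_sym \<open>open U\<close>])
       (use eqs in \<open>auto simp: q_eq_def P_eq_def p_of_def dH\<close>)
qed

section \<open>Second-order Taylor steps\<close>

text \<open>For the field \<open>F\<close> on \<open>(q, p, t)\<close> and \<open>w = (F x0, 1)\<close>, \<open>taylor_step F F' x0 w h\<close> is the
  second-order Taylor increment over time \<open>h\<close> of the solution of \<open>(q, p)' = F (q, p, t)\<close>
  through \<open>x0\<close>, since the derivative of \<open>t \<mapsto> F (q t, p t, t)\<close> at \<open>x0\<close> is \<open>F' x0 w\<close>.\<close>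

definition taylor_step :: "('a \<Rightarrow> 'b::real_vector) \<Rightarrow> ('a \<Rightarrow> 'a \<Rightarrow> 'b) \<Rightarrow> 'a \<Rightarrow> 'a \<Rightarrow> real \<Rightarrow> 'b" where
  "taylor_step F F' x0 w h = h *\<^sub>R F x0 + (h\<^sup>2 / 2) *\<^sub>R F' x0 w"

locale second_order_bounds =
  fixes F :: "'a::real_normed_vector \<Rightarrow> 'b::real_normed_vector" and F' :: "'a \<Rightarrow> 'a \<Rightarrow> 'b"
    and B :: "'a set" and x0 :: 'a and M Lf L2 N :: real
  assumes convex: "convex B" and centre: "x0 \<in> B"
    and F_deriv: "\<And>y. y \<in> B \<Longrightarrow> (F has_derivative F' y) (at y)"
    and F_bound: "\<And>y. y \<in> B \<Longrightarrow> norm (F y) \<le> M"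
    and F_lipschitz: "\<And>y w. y \<in> B \<Longrightarrow> w \<in> B \<Longrightarrow> norm (F y - F w) \<le> Lf * norm (y - w)"
    and F'_lipschitz: "\<And>y. y \<in> B \<Longrightarrow> onorm (F' y - F' x0) \<le> L2 * norm (y - x0)"
    and F'_bound: "\<And>w. norm (F' x0 w) \<le> N * norm w"
    and nonneg: "Lf \<ge> 0" "L2 \<ge> 0" "N \<ge> 0"
begin

lemma M_nonneg: "M \<ge> 0"
  using F_bound[OF centre] norm_ge_zero order_trans by blast

lemma linear_F': "linear (F' x0)"
  using F_deriv[OF centre] by (rule has_derivative_linear)

lemma quadratic_remainder:
  assumes "y \<in> B"
  shows "norm (F y - F x0 - F' x0 (y - x0)) \<le> L2 * (norm (y - x0))\<^sup>2"
proof -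
  have seg: "closed_segment x0 y \<subseteq> B" using convex centre assms by (simp add: closed_segment_subset)
  have "norm (F y - F x0 - F' x0 (y - x0)) \<le> norm (y - x0) * (L2 * norm (y - x0))"
  proof (rule differentiable_bound_linearization[where S="closed_segment x0 y" and f'=F'])
    show "(F has_derivative F' w) (at w within closed_segment x0 y)" if "w \<in> closed_segment x0 y" for w
      using F_deriv seg that by (auto intro: has_derivative_at_withinI)
    show "onorm (F' w - F' x0) \<le> L2 * norm (y - x0)" if "w \<in> closed_segment x0 y" for w
    proof -
      have "norm (w - x0) \<le> norm (y - x0)" using segment_bound1[OF that] .
      then show ?thesis
        using F'_lipschitz[of w] that seg nonneg by (meson mult_left_mono order_trans subsetD)
    qed
    show "x0 + t *\<^sub>R (y - x0) \<in> closed_segment x0 y" if "t \<in> {0..1}" for t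
      using that unfolding closed_segment_def by (auto intro!: exI[of _ t] simp: algebra_simps)
  qed simp
  then show ?thesis by (simp add: power2_eq_square mult_ac)
qed

lemma quadratic_remainder_le:
  assumes "y \<in> B" "norm (y - x0) \<le> r"
  shows "norm (F y - F x0 - F' x0 (y - x0)) \<le> L2 * r\<^sup>2"
  using quadratic_remainder[OF assms(1)] assms(2) nonneg
  by (meson norm_ge_zero order_trans power_mono mult_left_mono)

lemma two_point_average_taylor_error:
  assumes "x1 \<in> B" "x2 \<in> B" "h \<ge> 0"
    and "norm (x1 - x0) \<le> K * h" "norm (x2 - x0) \<le> K * h"
    and "norm (x1 + x2 - 2 *\<^sub>R x0 - h *\<^sub>R w) \<le> D * h\<^sup>2"
  shows "norm ((h / 2) *\<^sub>R (F x1 + F x2) - taylor_step F F' x0 w h) \<le> (L2 * K\<^sup>2 + N * D / 2) * h ^ 3"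
proof -
  define R1 where "R1 = F x1 - F x0 - F' x0 (x1 - x0)"
  define R2 where "R2 = F x2 - F x0 - F' x0 (x2 - x0)"
  have "h *\<^sub>R F x0 = (h / 2) *\<^sub>R F x0 + (h / 2) *\<^sub>R F x0"
    by (metis scaleR_add_left field_sum_of_halves)
  then have "(h / 2) *\<^sub>R (F x1 + F x2) - taylor_step F F' x0 w h
      = (h / 2) *\<^sub>R (R1 + R2 + F' x0 (x1 + x2 - 2 *\<^sub>R x0 - h *\<^sub>R w))"
    unfolding R1_def R2_def taylor_step_def
    by (simp add: linear_diff[OF linear_F'] linear_add[OF linear_F'] linear_scale[OF linear_F']
        scaleR_2 power2_eq_square algebra_simps)
  also have "norm \<dots> \<le> (h / 2) * (L2 * (K * h)\<^sup>2 + L2 * (K * h)\<^sup>2 + N * (D * h\<^sup>2))"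
  proof -
    have "norm (R1 + R2 + F' x0 (x1 + x2 - 2 *\<^sub>R x0 - h *\<^sub>R w))
        \<le> L2 * (K * h)\<^sup>2 + L2 * (K * h)\<^sup>2 + N * (D * h\<^sup>2)"
      using quadratic_remainder_le[OF assms(1,4)] quadratic_remainder_le[OF assms(2,5)]
        F'_bound[of "x1 + x2 - 2 *\<^sub>R x0 - h *\<^sub>R w"] mult_left_mono[OF assms(6) nonneg(3)]
        norm_triangle_ineq[of "R1 + R2" "F' x0 (x1 + x2 - 2 *\<^sub>R x0 - h *\<^sub>R w)"]
        norm_triangle_ineq[of R1 R2]
      unfolding R1_def R2_def by linarith
    then show ?thesis using assms(3) by (simp add: mult_left_mono)
  qed
  also have "\<dots> = (L2 * K\<^sup>2 + N * D / 2) * h ^ 3"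
    by (simp add: power2_eq_square power3_eq_cube algebra_simps)
  finally show ?thesis .
qed

lemma integral_curve_taylor_error:
  fixes x :: "real \<Rightarrow> 'b" and z :: "real \<Rightarrow> 'a"
  assumes "h \<ge> 0" and "z t0 = x0"
    and x_deriv: "\<And>t. t \<in> {t0..t0+h} \<Longrightarrow> (x has_vector_derivative F (z t)) (at t within {t0..t0+h})"
    and z_in: "\<And>t. t \<in> {t0..t0+h} \<Longrightarrow> z t \<in> B"
    and z_near: "\<And>t. t \<in> {t0..t0+h} \<Longrightarrow> norm (z t - x0) \<le> K * h"
    and z_linear: "\<And>t. t \<in> {t0..t0+h} \<Longrightarrow> norm (z t - x0 - (t - t0) *\<^sub>R w) \<le> D * h\<^sup>2"
  shows "norm (x (t0 + h) - x t0 - taylor_step F F' x0 w h) \<le> (L2 * K\<^sup>2 + N * D) * h ^ 3"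
proof -
  define \<phi> where "\<phi> t = x t - ((t - t0)\<^sup>2 / 2) *\<^sub>R F' x0 w" for t
  have "((\<lambda>t. ((t - t0)\<^sup>2 / 2) *\<^sub>R F' x0 w) has_vector_derivative (t - t0) *\<^sub>R F' x0 w) (at t within S)"
    for t S
  proof -
    have "((\<lambda>t. (t - t0)\<^sup>2 / 2) has_real_derivative (t - t0)) (at t within S)"
      by (auto intro!: derivative_eq_intros simp: power2_eq_square)
    from has_vector_derivative_scaleR[OF this has_vector_derivative_const] show ?thesis by simp
  qed
  then have \<phi>_deriv: "(\<phi> has_vector_derivative F (z t) - (t - t0) *\<^sub>R F' x0 w) (at t within {t0..t0+h})"
    if "t \<in> {t0..t0+h}" for t
    unfolding \<phi>_def[abs_def] by (intro has_vector_derivative_diff x_deriv that)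
  have "norm ((F (z t) - (t - t0) *\<^sub>R F' x0 w) - (F (z t0) - (t0 - t0) *\<^sub>R F' x0 w))
        \<le> L2 * (K * h)\<^sup>2 + N * (D * h\<^sup>2)" if t: "t \<in> {t0..t0+h}" for t
  proof -
    have eq: "(F (z t) - (t - t0) *\<^sub>R F' x0 w) - (F (z t0) - (t0 - t0) *\<^sub>R F' x0 w)
        = (F (z t) - F x0 - F' x0 (z t - x0)) + F' x0 (z t - x0 - (t - t0) *\<^sub>R w)"
      using \<open>z t0 = x0\<close> by (simp add: linear_diff[OF linear_F'] linear_scale[OF linear_F'])
    show ?thesis unfolding eq
      using quadratic_remainder_le[OF z_in[OF t] z_near[OF t]] F'_bound[of "z t - x0 - (t - t0) *\<^sub>R w"]
        mult_left_mono[OF z_linear[OF t] nonneg(3)]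
        norm_triangle_ineq[of "F (z t) - F x0 - F' x0 (z t - x0)" "F' x0 (z t - x0 - (t - t0) *\<^sub>R w)"]
      by linarith
  qed
  then have "norm (\<phi> (t0 + h) - \<phi> t0 - ((t0 + h) - t0) *\<^sub>R (F (z t0) - (t0 - t0) *\<^sub>R F' x0 w))
      \<le> norm ((t0 + h) - t0) * (L2 * (K * h)\<^sup>2 + N * (D * h\<^sup>2))"
    using \<open>h \<ge> 0\<close>
    by (intro vector_differentiable_bound_linearization[where S="{t0..t0+h}", OF \<phi>_deriv])
       (auto simp: closed_segment_eq_real_ivl)
  then show ?thesis
    using \<open>h \<ge> 0\<close> \<open>z t0 = x0\<close>
    by (simp add: \<phi>_def taylor_step_def power2_eq_square power3_eq_cube algebra_simps)
qed

end

lemma bounded_lipschitz_on_cball: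
  fixes G :: "'a::euclidean_space \<Rightarrow> 'b::real_normed_vector"
  assumes G_deriv: "\<And>y. (G has_derivative blinfun_apply (G' y)) (at y)"
    and "continuous_on (cball x0 R) G'"
  obtains K L where "\<And>y. y \<in> cball x0 R \<Longrightarrow> norm (G y) \<le> K" "L \<ge> 0"
    "\<And>y. y \<in> cball x0 R \<Longrightarrow> norm (G' y) \<le> L"
    "\<And>y w. y \<in> cball x0 R \<Longrightarrow> w \<in> cball x0 R \<Longrightarrow> norm (G y - G w) \<le> L * norm (y - w)"
proof -
  have "continuous_on (cball x0 R) G"
    using G_deriv by (meson has_derivative_continuous continuous_at_imp_continuous_on)
  then have "bounded (G ` cball x0 R)" "bounded (G' ` cball x0 R)"
    using assms(2) by (auto intro!: compact_imp_bounded compact_continuous_image)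
  then obtain K L where K: "\<And>y. y \<in> cball x0 R \<Longrightarrow> norm (G y) \<le> K"
    and L: "\<And>y. y \<in> cball x0 R \<Longrightarrow> norm (G' y) \<le> L"
    unfolding bounded_iff by blast
  define L0 where "L0 = max L 0"
  have "norm (G y - G w) \<le> L0 * norm (y - w)" if "y \<in> cball x0 R" "w \<in> cball x0 R" for y w
  proof (rule differentiable_bound[OF convex_cball _ _ that])
    show "(G has_derivative blinfun_apply (G' v)) (at v within cball x0 R)" for v
      using G_deriv by (rule has_derivative_at_withinI)
    show "onorm (blinfun_apply (G' v)) \<le> L0" if "v \<in> cball x0 R" for v
      using L[OF that] by (simp add: norm_blinfun.rep_eq[symmetric] L0_def)
  qed
  moreover have "norm (G' y) \<le> L0" if "y \<in> cball x0 R" for y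
    using L[OF that] by (simp add: L0_def)
  ultimately show ?thesis using K by (intro that[of K L0]) (simp_all add: L0_def)
qed

lemma second_order_bounds_cball:
  fixes G :: "'a::euclidean_space \<Rightarrow> 'b::real_normed_vector" and G' :: "'a \<Rightarrow> 'a \<Rightarrow>\<^sub>L 'b"
  assumes G_deriv: "\<And>y. (G has_derivative blinfun_apply (G' y)) (at y)"
    and G'_deriv: "\<And>y. (G' has_derivative blinfun_apply (G'' y)) (at y)"
    and "continuous_on UNIV G''" and "R \<ge> 0"
  obtains M Lf L2 N where "second_order_bounds G (\<lambda>y. blinfun_apply (G' y)) (cball x0 R) x0 M Lf L2 N"
proof -
  have "continuous_on (cball x0 R) G'"
    using G'_deriv by (meson has_derivative_continuous continuous_at_imp_continuous_on)
  with G_deriv obtain K1 K2 where K1: "\<And>y. y \<in> cball x0 R \<Longrightarrow> norm (G y) \<le> K1"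
    and "K2 \<ge> 0" and K2: "\<And>y. y \<in> cball x0 R \<Longrightarrow> norm (G' y) \<le> K2"
    and G_lip: "\<And>y w. y \<in> cball x0 R \<Longrightarrow> w \<in> cball x0 R \<Longrightarrow> norm (G y - G w) \<le> K2 * norm (y - w)"
    by (rule bounded_lipschitz_on_cball) blast
  have "continuous_on (cball x0 R) G''" using assms(3) by (rule continuous_on_subset) simp
  with G'_deriv obtain K3 where "K3 \<ge> 0"
    and G'_lip: "\<And>y w. y \<in> cball x0 R \<Longrightarrow> w \<in> cball x0 R \<Longrightarrow> norm (G' y - G' w) \<le> K3 * norm (y - w)"
    by (rule bounded_lipschitz_on_cball) blast
  have "second_order_bounds G (\<lambda>y. blinfun_apply (G' y)) (cball x0 R) x0 K1 K2 K3 K2"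
  proof
    show "onorm (blinfun_apply (G' y) - blinfun_apply (G' x0)) \<le> K3 * norm (y - x0)"
      if "y \<in> cball x0 R" for y
      using G'_lip[OF that, of x0] \<open>R \<ge> 0\<close> by (simp add: onorm_blinfun_apply_diff)
    show "norm (G' x0 w) \<le> K2 * norm w" for w
      using K2[of x0] \<open>R \<ge> 0\<close> norm_blinfun[of "G' x0" w] by (simp add: mult_right_mono order_trans)
  qed (use G_deriv K1 G_lip \<open>K2 \<ge> 0\<close> \<open>K3 \<ge> 0\<close> \<open>R \<ge> 0\<close> in auto)
  then show ?thesis by (rule that)
qed

lemma second_order_bounds_linear_image:
  assumes "second_order_bounds F F' B x0 M Lf L2 N" and "bounded_linear \<Lambda>"
  obtains n where "second_order_bounds (\<lambda>y. \<Lambda> (F y)) (\<lambda>y w. \<Lambda> (F' y w)) B x0 (M * n) (Lf * n) (L2 * n) (N * n)"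
proof -
  interpret second_order_bounds F F' B x0 M Lf L2 N by fact
  obtain n where "n > 0" and n: "\<And>v. norm (\<Lambda> v) \<le> norm v * n"
    using bounded_linear.pos_bounded[OF assms(2)] by blast
  have \<Lambda>_diff: "\<Lambda> u - \<Lambda> v = \<Lambda> (u - v)" for u v
    by (simp add: linear_diff[OF bounded_linear.linear[OF assms(2)]])
  have \<Lambda>_mono: "norm (\<Lambda> v) \<le> K * n" if "norm v \<le> K" for v K
    using n[of v] mult_right_mono[OF that less_imp_le[OF \<open>n > 0\<close>]] by linarith
  have "second_order_bounds (\<lambda>y. \<Lambda> (F y)) (\<lambda>y w. \<Lambda> (F' y w)) B x0 (M * n) (Lf * n) (L2 * n) (N * n)"
  proof
    show "((\<lambda>y. \<Lambda> (F y)) has_derivative (\<lambda>w. \<Lambda> (F' y w))) (at y)" if "y \<in> B" for y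
      by (rule bounded_linear.has_derivative[OF assms(2) F_deriv[OF that]])
    show "norm (\<Lambda> (F y) - \<Lambda> (F w)) \<le> Lf * n * norm (y - w)" if "y \<in> B" "w \<in> B" for y w
      using \<Lambda>_mono[OF F_lipschitz[OF that]] by (simp add: \<Lambda>_diff mult_ac)
    show "onorm ((\<lambda>w. \<Lambda> (F' y w)) - (\<lambda>w. \<Lambda> (F' x0 w))) \<le> L2 * n * norm (y - x0)" if "y \<in> B" for y
    proof (rule onorm_bound)
      show "0 \<le> L2 * n * norm (y - x0)" using nonneg \<open>n > 0\<close> by simp
      fix w
      have "bounded_linear (F' y - F' x0)"
        unfolding fun_diff_def
        by (intro bounded_linear_sub has_derivative_bounded_linear[OF F_deriv[OF that]]
            has_derivative_bounded_linear[OF F_deriv[OF centre]])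
      then have "norm ((F' y - F' x0) w) \<le> L2 * norm (y - x0) * norm w"
        using onorm[of "F' y - F' x0" w] F'_lipschitz[OF that] by (meson mult_right_mono norm_ge_zero order_trans)
      then have "norm (\<Lambda> ((F' y - F' x0) w)) \<le> L2 * norm (y - x0) * norm w * n" by (rule \<Lambda>_mono)
      then show "norm (((\<lambda>w. \<Lambda> (F' y w)) - (\<lambda>w. \<Lambda> (F' x0 w))) w) \<le> L2 * n * norm (y - x0) * norm w"
        by (simp add: \<Lambda>_diff mult_ac)
    qed
    show "norm (\<Lambda> (F' x0 w)) \<le> N * n * norm w" for w
      using \<Lambda>_mono[OF F'_bound[of w]] by (simp add: mult_ac)
  qed (use F_bound nonneg \<Lambda>_mono \<open>n > 0\<close> centre convex in auto)
  then show ?thesis by (rule that)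
qed

section \<open>The scheme is of second order\<close>

lemma norm_Pair3_le: "norm (a, b, c) \<le> norm a + norm b + norm c"
  using norm_Pair_le[of a "(b, c)"] norm_Pair_le[of b c] by simp

definition at_time :: "'a \<times> 'b \<Rightarrow> real \<Rightarrow> 'a \<times> 'b \<times> real" where
  "at_time v t = (fst v, snd v, t)"

lemma at_time_diff: "at_time u s - at_time v t = at_time (u - v) (s - t)"
  by (simp add: at_time_def)

lemma norm_at_time: "norm (at_time v t) = norm (v, t)"
  by (cases v) (simp add: at_time_def norm_Pair add.assoc)

lemma norm_at_time_le: "norm (at_time v t) \<le> norm v + \<bar>t\<bar>"
  using norm_Pair_le[of v t] by (simp add: norm_at_time)

lemma norm_at_time_zero: "norm (at_time v 0) = norm v"
  by (simp add: norm_at_time norm_Pair)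

lemma at_time_in_cball:
  assumes "norm (u - v) + \<bar>s - t\<bar> \<le> R"
  shows "at_time u s \<in> cball (at_time v t) R"
proof -
  have "dist (at_time v t) (at_time u s) = norm (at_time (u - v) (s - t))"
    by (metis at_time_diff dist_commute dist_norm)
  then show ?thesis using norm_at_time_le[of "u - v" "s - t"] assms by simp
qed

lemma dist_phase_time_le:
  assumes "norm (q - \<alpha>) \<le> r1" "norm (P - \<beta>) \<le> r2" "\<bar>s\<bar> \<le> r3" "r1 + r2 + r3 \<le> R"
  shows "dist (\<alpha>, \<beta>, t0) (q, P, t0 + s) \<le> R"
proof -
  have "(q, P, t0 + s) - (\<alpha>, \<beta>, t0) = (q - \<alpha>, P - \<beta>, s)" by simp
  then have "dist (\<alpha>, \<beta>, t0) (q, P, t0 + s) = norm (q - \<alpha>, P - \<beta>, s)"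
    by (metis dist_commute dist_norm)
  then show ?thesis using norm_Pair3_le[of "q - \<alpha>" "P - \<beta>" s] assms by simp
qed

lemma fixed_point_in_cball:
  fixes f :: "'a::euclidean_space \<Rightarrow> 'a"
  assumes "r > 0" "continuous_on (cball a r) f" "\<And>y. y \<in> cball a r \<Longrightarrow> norm (f y) \<le> r"
  obtains y where "y \<in> cball a r" "y = a + f y"
proof -
  have "(\<lambda>y. a + f y) \<in> cball a r \<rightarrow> cball a r" using assms(3) by (auto simp: dist_norm)
  moreover have "continuous_on (cball a r) (\<lambda>y. a + f y)" by (intro continuous_intros assms(2))
  ultimately show ?thesis using brouwer_ball[OF assms(1)] that by metis
qed

lemma implicit_stages_solvable:
  fixes F :: "'n::finite phase_time \<Rightarrow> (real^'n) \<times> (real^'n)"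
  assumes "continuous_on UNIV F"
    and small: "\<And>q P s. norm (q - \<alpha>) \<le> 1/2 \<Longrightarrow> norm (P - \<beta>) \<le> 1/2 \<Longrightarrow> s \<in> {t1, t2} \<Longrightarrow>
      norm (c *\<^sub>R F (q, P, s)) \<le> 1/4"
  obtains q P where "norm (q - \<alpha>) \<le> 1/2" "norm (P - \<beta>) \<le> 1/2"
    "q = \<alpha> + c *\<^sub>R fst (F (q, \<beta>, t1))"
    "P = \<beta> + c *\<^sub>R snd (F (q, \<beta>, t1)) + c *\<^sub>R snd (F (q, P, t2))"
proof -
  have comp: "norm (g v) \<le> norm v" if "g = fst \<or> g = snd" for g and v :: "(real^'n) \<times> (real^'n)"
    using that norm_fst_le[of "fst v" "snd v"] norm_snd_le[of "snd v" "fst v"] by auto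
  obtain q where q: "q \<in> cball \<alpha> (1/2)" "q = \<alpha> + c *\<^sub>R fst (F (q, \<beta>, t1))"
  proof (rule fixed_point_in_cball)
    show "continuous_on (cball \<alpha> (1/2)) (\<lambda>q. c *\<^sub>R fst (F (q, \<beta>, t1)))"
      by (intro continuous_intros continuous_on_compose2[OF assms(1)]) auto
    show "norm (c *\<^sub>R fst (F (y, \<beta>, t1))) \<le> 1/2" if "y \<in> cball \<alpha> (1/2)" for y
      using comp[of fst "c *\<^sub>R F (y, \<beta>, t1)"] small[of y \<beta> t1] that
      by (simp add: dist_norm norm_minus_commute)
  qed (use that in auto)
  have "norm (q - \<alpha>) \<le> 1/2" using q(1) by (simp add: dist_norm norm_minus_commute)
  obtain P where P: "P \<in> cball \<beta> (1/2)"
    "P = \<beta> + (c *\<^sub>R snd (F (q, \<beta>, t1)) + c *\<^sub>R snd (F (q, P, t2)))"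
  proof (rule fixed_point_in_cball)
    show "continuous_on (cball \<beta> (1/2)) (\<lambda>P. c *\<^sub>R snd (F (q, \<beta>, t1)) + c *\<^sub>R snd (F (q, P, t2)))"
      by (intro continuous_intros continuous_on_compose2[OF assms(1)]) auto
    show "norm (c *\<^sub>R snd (F (q, \<beta>, t1)) + c *\<^sub>R snd (F (q, P, t2))) \<le> 1/2"
      if "P \<in> cball \<beta> (1/2)" for P
      using comp[of snd "c *\<^sub>R F (q, \<beta>, t1)"] comp[of snd "c *\<^sub>R F (q, P, t2)"]
        small[of q \<beta> t1] small[of q P t2] that \<open>norm (q - \<alpha>) \<le> 1/2\<close>
        norm_triangle_ineq[of "c *\<^sub>R snd (F (q, \<beta>, t1))" "c *\<^sub>R snd (F (q, P, t2))"]
      by (simp add: dist_norm norm_minus_commute)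
  qed (use that in auto)
  show ?thesis
    by (rule that[of q P]) (use q P \<open>norm (q - \<alpha>) \<le> 1/2\<close> in \<open>auto simp: dist_norm norm_minus_commute add.assoc\<close>)
qed

lemma scheme_solvable_near:
  fixes F :: "'n::finite phase_time \<Rightarrow> (real^'n) \<times> (real^'n)"
  assumes "continuous_on UNIV F"
    and dHp: "\<And>q p t. dHp H q p t = fst (F (q, p, t))" and dHq: "\<And>q p t. dHq H q p t = - snd (F (q, p, t))"
    and F_bound: "\<And>y. y \<in> cball (\<alpha>, \<beta>, t0) R \<Longrightarrow> norm (F y) \<le> M"
    and "1 + \<bar>a\<bar> + \<bar>1 - a\<bar> \<le> R" and "0 < h" "h \<le> 1" "h * M \<le> 1/2"
  shows "\<exists>q P. dist q \<alpha> < 1 \<and> dist P \<beta> < 1 \<and> q_eq H h t0 a \<alpha> \<beta> q \<and> P_eq H h t0 a \<beta> q P"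
proof -
  have "norm ((h / 2) *\<^sub>R F (q, P, s)) \<le> 1/4"
    if "norm (q - \<alpha>) \<le> 1/2" "norm (P - \<beta>) \<le> 1/2" "s \<in> {t0 + a * h, t0 + (1 - a) * h}" for q P s
  proof -
    have "\<bar>a * h\<bar> \<le> \<bar>a\<bar>" "\<bar>(1 - a) * h\<bar> \<le> \<bar>1 - a\<bar>"
      using \<open>0 < h\<close> \<open>h \<le> 1\<close> by (simp_all add: abs_mult mult_left_le)
    then have "(q, P, s) \<in> cball (\<alpha>, \<beta>, t0) R"
      using that dist_phase_time_le[of q \<alpha> "1/2" P \<beta> "1/2"] \<open>1 + \<bar>a\<bar> + \<bar>1 - a\<bar> \<le> R\<close> by fastforce
    then have "h * norm (F (q, P, s)) \<le> h * M" using F_bound \<open>0 < h\<close> by (simp add: mult_left_mono)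
    moreover have "norm ((h / 2) *\<^sub>R F (q, P, s)) = h / 2 * norm (F (q, P, s))" using \<open>0 < h\<close> by simp
    ultimately show ?thesis using \<open>h * M \<le> 1/2\<close> by linarith
  qed
  then obtain q P where "norm (q - \<alpha>) \<le> 1/2" "norm (P - \<beta>) \<le> 1/2"
    "q = \<alpha> + (h / 2) *\<^sub>R fst (F (q, \<beta>, t0 + a * h))"
    "P = \<beta> + (h / 2) *\<^sub>R snd (F (q, \<beta>, t0 + a * h)) + (h / 2) *\<^sub>R snd (F (q, P, t0 + (1 - a) * h))"
    by (rule implicit_stages_solvable[OF assms(1)]) blast
  then show ?thesis
    by (intro exI[of _ q] exI[of _ P])
       (simp add: q_eq_def P_eq_def p_of_def dHp dHq dist_norm)
qed

context
  fixes F :: "'n::finite phase_time \<Rightarrow> (real^'n) \<times> (real^'n)" and F' :: "'n phase_time \<Rightarrow> 'n phase_time \<Rightarrow> _"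
    and B \<alpha> \<beta> t0 M Lf L2 N h a q P x0 x1 x2 K
  assumes sob: "second_order_bounds F F' B x0 M Lf L2 N" and "h > 0"
    and x0_def: "x0 = (\<alpha>, \<beta>, t0)" and x1_def: "x1 = (q, \<beta>, t0 + a * h)" and x2_def: "x2 = (q, P, t0 + (1 - a) * h)"
    and stages_in: "x1 \<in> B" "x2 \<in> B"
    and q_fixed: "q = \<alpha> + (h / 2) *\<^sub>R fst (F x1)"
    and P_fixed: "P = \<beta> + (h / 2) *\<^sub>R snd (F x1) + (h / 2) *\<^sub>R snd (F x2)"
    and K_def: "K = 2 * M + \<bar>a\<bar> + \<bar>1 - a\<bar>"
begin

lemma scheme_stage_increments:
  "q - \<alpha> = (h / 2) *\<^sub>R fst (F x1)" "P - \<beta> = (h / 2) *\<^sub>R snd (F x1) + (h / 2) *\<^sub>R snd (F x2)"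
  using arg_cong[OF q_fixed, of "\<lambda>v. v - \<alpha>"] arg_cong[OF P_fixed, of "\<lambda>v. v - \<beta>"] by simp_all

lemma scheme_stages_near: "norm (x1 - x0) \<le> K * h" "norm (x2 - x0) \<le> K * h"
proof -
  interpret second_order_bounds F F' B x0 M Lf L2 N by (fact sob)
  have "norm ((h / 2) *\<^sub>R g (F y)) \<le> h / 2 * M" if "y \<in> B" "g = fst \<or> g = snd" for y g
  proof -
    have "norm (g (F y)) \<le> M"
      using that F_bound[of y] norm_fst_le[of "fst (F y)" "snd (F y)"] norm_snd_le[of "snd (F y)" "fst (F y)"]
      by auto
    then show ?thesis using \<open>h > 0\<close> by (simp add: mult_left_mono)
  qed
  then have "norm (q - \<alpha>) \<le> h / 2 * M" and "norm (P - \<beta>) \<le> h / 2 * M + h / 2 * M"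
    using stages_in norm_triangle_ineq[of "(h / 2) *\<^sub>R snd (F x1)" "(h / 2) *\<^sub>R snd (F x2)"]
    unfolding scheme_stage_increments by (blast, smt (verit))
  moreover have "x1 - x0 = (q - \<alpha>, 0, a * h)" "x2 - x0 = (q - \<alpha>, P - \<beta>, (1 - a) * h)"
    by (simp_all add: x0_def x1_def x2_def algebra_simps)
  then have "norm (x1 - x0) \<le> norm (q - \<alpha>) + norm (0::real^'n) + \<bar>a\<bar> * h"
    and "norm (x2 - x0) \<le> norm (q - \<alpha>) + norm (P - \<beta>) + \<bar>1 - a\<bar> * h"
    using norm_Pair3_le[of "q - \<alpha>" "0::real^'n" "a * h"] norm_Pair3_le[of "q - \<alpha>" "P - \<beta>" "(1 - a) * h"]
      \<open>h > 0\<close> by (simp_all add: abs_mult)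
  moreover have "K * h = 4 * (h / 2 * M) + \<bar>a\<bar> * h + \<bar>1 - a\<bar> * h" by (simp add: K_def algebra_simps)
  moreover have "0 \<le> h / 2 * M" "0 \<le> \<bar>a\<bar> * h" "0 \<le> \<bar>1 - a\<bar> * h" using \<open>h > 0\<close> M_nonneg by simp_all
  ultimately show "norm (x1 - x0) \<le> K * h" "norm (x2 - x0) \<le> K * h" by (auto simp: algebra_simps)
qed

lemma scheme_stages_sum: "norm (x1 + x2 - 2 *\<^sub>R x0 - h *\<^sub>R at_time (F x0) 1) \<le> (2 * (Lf * K)) * h\<^sup>2"
proof -
  interpret second_order_bounds F F' B x0 M Lf L2 N by (fact sob)
  define d1 d2 where "d1 = F x1 - F x0" and "d2 = F x2 - F x0"
  have "norm d1 \<le> Lf * (K * h)" "norm d2 \<le> Lf * (K * h)"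
    using F_lipschitz[OF stages_in(1) centre] F_lipschitz[OF stages_in(2) centre] scheme_stages_near nonneg(1)
    unfolding d1_def d2_def by (meson mult_left_mono order_trans)+
  moreover have "norm (fst d1, snd d2) \<le> norm d1 + norm d2"
    using norm_Pair_le[of "fst d1" "snd d2"] norm_fst_le[of "fst d1" "snd d1"] norm_snd_le[of "snd d2" "fst d2"]
    by simp
  ultimately have "norm (d1 + (fst d1, snd d2)) \<le> 4 * (Lf * (K * h))"
    using norm_triangle_ineq[of d1 "(fst d1, snd d2)"] norm_ge_zero[of d1] by linarith
  moreover have "x1 + x2 - 2 *\<^sub>R x0 - h *\<^sub>R at_time (F x0) 1 = at_time ((h / 2) *\<^sub>R (d1 + (fst d1, snd d2))) 0"
  proof -
    have "q + q - 2 *\<^sub>R \<alpha> = h *\<^sub>R fst (F x1)"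
      using scheme_stage_increments(1) by (simp add: algebra_simps scaleR_2 flip: scaleR_add_left)
    moreover have "\<beta> + P - 2 *\<^sub>R \<beta> = (h / 2) *\<^sub>R snd (F x1) + (h / 2) *\<^sub>R snd (F x2)"
      using scheme_stage_increments(2) by (simp add: algebra_simps scaleR_2)
    ultimately show ?thesis
      by (simp add: x0_def x1_def x2_def d1_def d2_def at_time_def algebra_simps scaleR_2 flip: scaleR_add_left)
  qed
  ultimately show ?thesis using \<open>h > 0\<close> by (simp add: norm_at_time_zero power2_eq_square)
qed

lemma scheme_local_error:
  "norm ((q + (h / 2) *\<^sub>R fst (F x2), P) - (\<alpha>, \<beta>) - taylor_step F F' x0 (at_time (F x0) 1) h)
    \<le> (L2 * K\<^sup>2 + N * (Lf * K)) * h ^ 3"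
proof -
  interpret second_order_bounds F F' B x0 M Lf L2 N by (fact sob)
  have "(q + (h / 2) *\<^sub>R fst (F x2), P) - (\<alpha>, \<beta>) = (q - \<alpha> + (h / 2) *\<^sub>R fst (F x2), P - \<beta>)"
    by (simp add: algebra_simps)
  also have "\<dots> = (h / 2) *\<^sub>R (F x1 + F x2)"
    unfolding scheme_stage_increments by (simp add: prod_eq_iff algebra_simps)
  finally show ?thesis
    using two_point_average_taylor_error[OF stages_in _ scheme_stages_near scheme_stages_sum] \<open>h > 0\<close> by simp
qed

end

context
  fixes F :: "'n::finite phase_time \<Rightarrow> (real^'n) \<times> (real^'n)" and F' :: "'n phase_time \<Rightarrow> 'n phase_time \<Rightarrow> _"
    and B M Lf L2 N and x :: "real \<Rightarrow> (real^'n) \<times> (real^'n)" and t0 h x0 K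
  assumes sob: "second_order_bounds F F' B x0 M Lf L2 N" and "h \<ge> 0"
    and x0_def: "x0 = at_time (x t0) t0"
    and x_deriv: "\<And>t. t \<in> {t0..t0+h} \<Longrightarrow>
      (x has_vector_derivative F (at_time (x t) t)) (at t within {t0..t0+h})"
    and x_in: "\<And>t. t \<in> {t0..t0+h} \<Longrightarrow> at_time (x t) t \<in> B"
    and K_def: "K = 3 * M + 1"
begin

lemma flow_linearization:
  assumes "t \<in> {t0..t0+h}" and "\<And>s. s \<in> {t0..t} \<Longrightarrow> norm (F (at_time (x s) s) - F x0) \<le> E"
  shows "norm (x t - x t0 - (t - t0) *\<^sub>R F x0) \<le> (t - t0) * E"
proof -
  have "{t0..t} \<subseteq> {t0..t0+h}" using assms(1) by auto
  then have "norm (x t - x t0 - (t - t0) *\<^sub>R F (at_time (x t0) t0)) \<le> norm (t - t0) * E"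
    using assms by (intro vector_differentiable_bound_linearization[where S="{t0..t}"])
      (auto simp: x0_def closed_segment_eq_real_ivl intro: has_vector_derivative_within_subset[OF x_deriv])
  then show ?thesis using assms(1) by (simp add: x0_def)
qed

lemma flow_near:
  assumes t: "t \<in> {t0..t0+h}"
  shows "norm (at_time (x t) t - x0) \<le> K * h"
proof -
  interpret second_order_bounds F F' B x0 M Lf L2 N by (fact sob)
  have "norm (x t - x t0 - (t - t0) *\<^sub>R F x0) \<le> (t - t0) * (2 * M)"
  proof (rule flow_linearization[OF t])
    fix s assume "s \<in> {t0..t}"
    then have "s \<in> {t0..t0+h}" using t by auto
    then show "norm (F (at_time (x s) s) - F x0) \<le> 2 * M"
      using F_bound[OF x_in] F_bound[OF centre] norm_triangle_ineq4[of "F (at_time (x s) s)" "F x0"]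
      by fastforce
  qed
  then have "norm (x t - x t0) \<le> (t - t0) * (3 * M)"
    using t F_bound[OF centre] norm_triangle_ineq[of "x t - x t0 - (t - t0) *\<^sub>R F x0" "(t - t0) *\<^sub>R F x0"]
      mult_left_mono[of "norm (F x0)" M "t - t0"] by auto
  moreover have "norm (at_time (x t) t - x0) \<le> norm (x t - x t0) + (t - t0)"
    using norm_at_time_le[of "x t - x t0" "t - t0"] t by (simp add: x0_def at_time_diff)
  moreover have "(t - t0) * (3 * M) \<le> h * (3 * M)" using t M_nonneg by (intro mult_right_mono) auto
  ultimately show ?thesis using t by (simp add: K_def algebra_simps)
qed

lemma flow_local_error:
  "norm (x (t0 + h) - x t0 - taylor_step F F' x0 (at_time (F x0) 1) h) \<le> (L2 * K\<^sup>2 + N * (Lf * K)) * h ^ 3"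
proof -
  interpret second_order_bounds F F' B x0 M Lf L2 N by (fact sob)
  have "norm (at_time (x t) t - x0 - (t - t0) *\<^sub>R at_time (F x0) 1) \<le> (Lf * K) * h\<^sup>2"
    if t: "t \<in> {t0..t0+h}" for t
  proof -
    have "norm (x t - x t0 - (t - t0) *\<^sub>R F x0) \<le> (t - t0) * (Lf * (K * h))"
    proof (rule flow_linearization[OF t])
      fix s assume "s \<in> {t0..t}"
      then have "s \<in> {t0..t0+h}" using t by auto
      then show "norm (F (at_time (x s) s) - F x0) \<le> Lf * (K * h)"
        using F_lipschitz[OF x_in centre] flow_near nonneg(1) by (meson mult_left_mono order_trans)
    qed
    also have "\<dots> \<le> h * (Lf * (K * h))"
      using t nonneg(1) M_nonneg \<open>h \<ge> 0\<close> by (intro mult_right_mono) (auto simp: K_def)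
    finally have "norm (x t - x t0 - (t - t0) *\<^sub>R F x0) \<le> h * (Lf * (K * h))" .
    moreover have "at_time (x t) t - x0 - (t - t0) *\<^sub>R at_time (F x0) 1 = at_time (x t - x t0 - (t - t0) *\<^sub>R F x0) 0"
      by (simp add: x0_def at_time_def algebra_simps)
    ultimately show ?thesis by (simp add: norm_at_time_zero power2_eq_square mult_ac)
  qed
  then show ?thesis
    using integral_curve_taylor_error[OF \<open>h \<ge> 0\<close> _ x_deriv x_in flow_near] by (simp add: x0_def)
qed

end

lemma scheme_one_step_error:
  fixes F :: "'n::finite phase_time \<Rightarrow> (real^'n) \<times> (real^'n)" and x :: "real \<Rightarrow> (real^'n) \<times> (real^'n)"
  assumes sob: "second_order_bounds F F' (cball (\<alpha>, \<beta>, t0) R) (\<alpha>, \<beta>, t0) M Lf L2 N"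
    and dHp: "\<And>q p t. dHp H q p t = fst (F (q, p, t))" and dHq: "\<And>q p t. dHq H q p t = - snd (F (q, p, t))"
    and "x t0 = (\<alpha>, \<beta>)" and "0 < h" "h \<le> 1" and "2 + \<bar>a\<bar> + \<bar>1 - a\<bar> \<le> R"
    and x_deriv: "\<And>t. t \<in> {t0..t0+h} \<Longrightarrow>
      (x has_vector_derivative F (at_time (x t) t)) (at t within {t0..t0+h})"
    and x_in: "\<And>t. t \<in> {t0..t0+h} \<Longrightarrow> at_time (x t) t \<in> cball (\<alpha>, \<beta>, t0) R"
    and "dist q \<alpha> < 1" "dist P \<beta> < 1" and "q_eq H h t0 a \<alpha> \<beta> q" "P_eq H h t0 a \<beta> q P"
  defines "Ks \<equiv> 2 * M + \<bar>a\<bar> + \<bar>1 - a\<bar>" and "Kf \<equiv> 3 * M + 1"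
  shows "norm ((Q_of H h t0 a q P, P) - x (t0 + h))
      \<le> (L2 * Ks\<^sup>2 + N * (Lf * Ks) + (L2 * Kf\<^sup>2 + N * (Lf * Kf))) * h ^ 3"
proof -
  define T where "T = taylor_step F F' (\<alpha>, \<beta>, t0) (at_time (F (\<alpha>, \<beta>, t0)) 1) h"
  have x0: "(\<alpha>, \<beta>, t0) = at_time (x t0) t0" by (simp add: at_time_def \<open>x t0 = (\<alpha>, \<beta>)\<close>)
  have "\<bar>a * h\<bar> \<le> \<bar>a\<bar>" "\<bar>(1 - a) * h\<bar> \<le> \<bar>1 - a\<bar>"
    using \<open>0 < h\<close> \<open>h \<le> 1\<close> by (simp_all add: abs_mult mult_left_le)
  moreover have "norm (q - \<alpha>) \<le> 1" "norm (P - \<beta>) \<le> 1"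
    using \<open>dist q \<alpha> < 1\<close> \<open>dist P \<beta> < 1\<close> by (simp_all add: dist_norm)
  ultimately have "(q, \<beta>, t0 + a * h) \<in> cball (\<alpha>, \<beta>, t0) R"
    and "(q, P, t0 + (1 - a) * h) \<in> cball (\<alpha>, \<beta>, t0) R"
    using \<open>2 + \<bar>a\<bar> + \<bar>1 - a\<bar> \<le> R\<close>
    by (auto intro!: dist_phase_time_le[of q \<alpha> 1 \<beta> \<beta> 1 "a * h" "\<bar>a\<bar>"]
        dist_phase_time_le[of q \<alpha> 1 P \<beta> 1 "(1 - a) * h" "\<bar>1 - a\<bar>"])
  moreover have "q = \<alpha> + (h / 2) *\<^sub>R fst (F (q, \<beta>, t0 + a * h))"
    "P = \<beta> + (h / 2) *\<^sub>R snd (F (q, \<beta>, t0 + a * h)) + (h / 2) *\<^sub>R snd (F (q, P, t0 + (1 - a) * h))"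
    using \<open>q_eq H h t0 a \<alpha> \<beta> q\<close> \<open>P_eq H h t0 a \<beta> q P\<close> by (simp_all add: q_eq_def P_eq_def p_of_def dHp dHq)
  ultimately have "norm ((Q_of H h t0 a q P, P) - (\<alpha>, \<beta>) - T) \<le> (L2 * Ks\<^sup>2 + N * (Lf * Ks)) * h ^ 3"
    unfolding T_def Ks_def Q_of_def dHp
    by (intro scheme_local_error[OF sob \<open>0 < h\<close> refl refl refl]) simp_all
  moreover have "norm (x (t0 + h) - (\<alpha>, \<beta>) - T) \<le> (L2 * Kf\<^sup>2 + N * (Lf * Kf)) * h ^ 3"
    using flow_local_error[OF sob _ x0 x_deriv x_in refl] \<open>0 < h\<close>
    unfolding T_def Kf_def by (simp add: \<open>x t0 = (\<alpha>, \<beta>)\<close>)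
  moreover have triangle: "norm (A - B) \<le> norm (A - C - T) + norm (B - C - T)"
    for A B C :: "(real^'n) \<times> (real^'n)"
    using norm_triangle_ineq4[of "A - C - T" "B - C - T"] by (simp add: algebra_simps)
  ultimately show ?thesis
    using triangle[of "(Q_of H h t0 a q P, P)" "x (t0 + h)" "(\<alpha>, \<beta>)"] by (simp add: distrib_right)
qed

lemma scheme_second_order_for_field:
  fixes F :: "'n::finite phase_time \<Rightarrow> (real^'n) \<times> (real^'n)" and x :: "real \<Rightarrow> (real^'n) \<times> (real^'n)"
  assumes "continuous_on UNIV F"
    and dHp: "\<And>q p t. dHp H q p t = fst (F (q, p, t))" and dHq: "\<And>q p t. dHq H q p t = - snd (F (q, p, t))"
    and sob: "second_order_bounds F F' (cball (\<alpha>, \<beta>, t0) R) (\<alpha>, \<beta>, t0) M Lf L2 N"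
    and R_def: "R = 2 + \<bar>a\<bar> + \<bar>1 - a\<bar>"
    and "\<epsilon> > 0" "x t0 = (\<alpha>, \<beta>)"
    and x_deriv: "\<And>t. t \<in> ball t0 \<epsilon> \<Longrightarrow> (x has_vector_derivative F (at_time (x t) t)) (at t)"
  shows "\<exists>r>0. \<exists>\<delta>>0. \<exists>C. \<forall>h. 0 < h \<and> h < \<delta> \<longrightarrow>
    (\<exists>q P. dist q \<alpha> < r \<and> dist P \<beta> < r \<and> q_eq H h t0 a \<alpha> \<beta> q \<and> P_eq H h t0 a \<beta> q P) \<and>
    (\<forall>q P. dist q \<alpha> < r \<and> dist P \<beta> < r \<and> q_eq H h t0 a \<alpha> \<beta> q \<and> P_eq H h t0 a \<beta> q P \<longrightarrow>
      norm (Q_of H h t0 a q P - fst (x (t0 + h))) \<le> C * h ^ 3 \<and> norm (P - snd (x (t0 + h))) \<le> C * h ^ 3)"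
proof -
  interpret second_order_bounds F F' "cball (\<alpha>, \<beta>, t0) R" "(\<alpha>, \<beta>, t0)" M Lf L2 N by (fact sob)
  obtain d where "d > 0" and x_near: "\<And>t. dist t t0 < d \<Longrightarrow> dist (x t) (x t0) < 1"
    using has_vector_derivative_continuous[OF x_deriv[of t0]] \<open>\<epsilon> > 0\<close>
    unfolding continuous_at_eps_delta by (metis centre_in_ball zero_less_one)
  define \<delta> where "\<delta> = min (min \<epsilon> d) (min 1 (1 / (2 * M + 1)))"
  define Ks Kf where "Ks = 2 * M + \<bar>a\<bar> + \<bar>1 - a\<bar>" and "Kf = 3 * M + 1"
  define C where "C = L2 * Ks\<^sup>2 + N * (Lf * Ks) + (L2 * Kf\<^sup>2 + N * (Lf * Kf))"
  have "\<delta> > 0" using \<open>\<epsilon> > 0\<close> \<open>d > 0\<close> M_nonneg by (simp add: \<delta>_def)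
  have solvable: "\<exists>q P. dist q \<alpha> < 1 \<and> dist P \<beta> < 1 \<and> q_eq H h t0 a \<alpha> \<beta> q \<and> P_eq H h t0 a \<beta> q P"
    if "0 < h" "h < \<delta>" for h
  proof (rule scheme_solvable_near[OF assms(1) dHp dHq F_bound])
    have "h < 1" using that by (simp add: \<delta>_def)
    have "h * (2 * M + 1) < 1" using that M_nonneg by (simp add: \<delta>_def field_simps)
    then show "h \<le> 1" "h * M \<le> 1/2" using \<open>h < 1\<close> that by (simp_all add: algebra_simps)
  qed (use that in \<open>auto simp: R_def\<close>)
  have error: "norm ((Q_of H h t0 a q P, P) - x (t0 + h)) \<le> C * h ^ 3"
    if "0 < h" "h < \<delta>" "dist q \<alpha> < 1" "dist P \<beta> < 1" "q_eq H h t0 a \<alpha> \<beta> q" "P_eq H h t0 a \<beta> q P"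
    for h q P
  proof -
    have "h < \<epsilon>" "h < d" "h < 1" using that by (simp_all add: \<delta>_def)
    have x0: "(\<alpha>, \<beta>, t0) = at_time (x t0) t0" by (simp add: at_time_def \<open>x t0 = (\<alpha>, \<beta>)\<close>)
    show ?thesis unfolding C_def Ks_def Kf_def
    proof (rule scheme_one_step_error[where x=x, OF sob dHp dHq \<open>x t0 = (\<alpha>, \<beta>)\<close> \<open>0 < h\<close> _ _ _ _ that(3-6)])
      fix t assume t: "t \<in> {t0..t0+h}"
      show "(x has_vector_derivative F (at_time (x t) t)) (at t within {t0..t0+h})"
        by (rule has_vector_derivative_at_within[OF x_deriv]) (use t \<open>h < \<epsilon>\<close> in \<open>auto simp: dist_real_def\<close>)
      have "norm (x t - x t0) < 1" using x_near[of t] t \<open>h < d\<close> by (simp add: dist_norm)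
      then show "at_time (x t) t \<in> cball (\<alpha>, \<beta>, t0) R"
        unfolding x0 using t \<open>h < 1\<close> by (intro at_time_in_cball) (auto simp: R_def)
    qed (use \<open>h < 1\<close> in \<open>simp_all add: R_def\<close>)
  qed
  have components: "norm (Q - fst X) \<le> norm ((Q, P) - X) \<and> norm (P - snd X) \<le> norm ((Q, P) - X)"
    for Q P :: "real^'n" and X :: "(real^'n) \<times> (real^'n)"
    using norm_fst_le[of "Q - fst X" "P - snd X"] norm_snd_le[of "P - snd X" "Q - fst X"] by (cases X) simp
  show ?thesis
    by (rule exI[of _ 1], rule conjI[OF zero_less_one], rule exI[of _ \<delta>], rule conjI[OF \<open>\<delta> > 0\<close>],
        rule exI[of _ C]) (use solvable error components in \<open>blast intro: order_trans\<close>)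
qed

lemma scheme_second_order:
  fixes H :: "real^'n::finite \<Rightarrow> real^'n \<Rightarrow> real \<Rightarrow> real" and x :: "real \<Rightarrow> (real^'n) \<times> (real^'n)"
  assumes H_deriv: "\<And>y. ((\<lambda>(q, p, t). H q p t) has_derivative blinfun_apply (H' y)) (at y)"
    and H'_deriv: "\<And>y. (H' has_derivative blinfun_apply (H'' y)) (at y)"
    and H''_deriv: "\<And>y. (H'' has_derivative blinfun_apply (H''' y)) (at y)"
    and "continuous_on UNIV H'''"
    and "\<epsilon> > 0" "x t0 = (\<alpha>, \<beta>)"
    and ode: "\<And>t. t \<in> ball t0 \<epsilon> \<Longrightarrow>
      (x has_vector_derivative (dHp H (fst (x t)) (snd (x t)) t, - dHq H (fst (x t)) (snd (x t)) t)) (at t)"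
  shows "\<exists>r>0. \<exists>\<delta>>0. \<exists>C. \<forall>h. 0 < h \<and> h < \<delta> \<longrightarrow>
    (\<exists>q P. dist q \<alpha> < r \<and> dist P \<beta> < r \<and> q_eq H h t0 a \<alpha> \<beta> q \<and> P_eq H h t0 a \<beta> q P) \<and>
    (\<forall>q P. dist q \<alpha> < r \<and> dist P \<beta> < r \<and> q_eq H h t0 a \<alpha> \<beta> q \<and> P_eq H h t0 a \<beta> q P \<longrightarrow>
      norm (Q_of H h t0 a q P - fst (x (t0 + h))) \<le> C * h ^ 3 \<and> norm (P - snd (x (t0 + h))) \<le> C * h ^ 3)"
proof -
  define F where "F y = hamiltonian_field (H' y)" for y
  have dHp: "dHp H q p t = fst (F (q, p, t))" and dHq: "dHq H q p t = - snd (F (q, p, t))" for q p t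
    by (simp_all add: F_def hamiltonian_field_def dHp_eq_p_gradient[OF H_deriv[of "(q, p, t)"]]
        dHq_eq_q_gradient[OF H_deriv[of "(q, p, t)"]])
  have "continuous_on UNIV H'"
    using H'_deriv by (meson has_derivative_continuous continuous_at_imp_continuous_on)
  then have F_cont: "continuous_on UNIV F"
    unfolding F_def by (rule bounded_linear.continuous_on[OF bounded_linear_hamiltonian_field])
  \<comment> \<open>For \<open>h < 1\<close> this ball contains both stage points of solutions within distance 1 of
    \<open>(\<alpha>, \<beta>)\<close>, and the trajectory while it stays within distance 1 of \<open>(\<alpha>, \<beta>)\<close>.\<close>
  define R where "R = 2 + \<bar>a\<bar> + \<bar>1 - a\<bar>"
  then have "R \<ge> 0" by (simp add: add_nonneg_nonneg)
  obtain M Lf L2 N where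
    "second_order_bounds H' (\<lambda>y. blinfun_apply (H'' y)) (cball (\<alpha>, \<beta>, t0) R) (\<alpha>, \<beta>, t0) M Lf L2 N"
    by (rule second_order_bounds_cball[OF H'_deriv H''_deriv \<open>continuous_on UNIV H'''\<close> \<open>R \<ge> 0\<close>])
  then obtain n where sob:
    "second_order_bounds F (\<lambda>y w. hamiltonian_field (H'' y w)) (cball (\<alpha>, \<beta>, t0) R) (\<alpha>, \<beta>, t0)
      (M * n) (Lf * n) (L2 * n) (N * n)"
    unfolding F_def by (rule second_order_bounds_linear_image[OF _ bounded_linear_hamiltonian_field])
  have x_deriv: "(x has_vector_derivative F (at_time (x t) t)) (at t)" if "t \<in> ball t0 \<epsilon>" for t
    using ode[OF that] by (simp add: dHp dHq at_time_def)
  show ?thesis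
    by (rule scheme_second_order_for_field[OF F_cont dHp dHq sob R_def \<open>\<epsilon> > 0\<close> \<open>x t0 = (\<alpha>, \<beta>)\<close> x_deriv])
qed

theorem mainTheorem11:
  fixes H :: "real^'n \<Rightarrow> real^'n \<Rightarrow> real \<Rightarrow> real" and t0 a :: real
  assumes "C3_on UNIV (\<lambda>(q, p, t). H q p t)"
  shows
   "(\<forall>(h::real) (U :: ((real^'n) \<times> (real^'n)) set) (qf :: (real^'n) \<times> (real^'n) \<Rightarrow> real^'n) Pf.
       h > 0 \<and> open U \<and> C1_on U qf \<and> C1_on U Pf \<and>
       (\<forall>z\<in>U. q_eq H h t0 a (fst z) (snd z) (qf z) \<and> P_eq H h t0 a (snd z) (qf z) (Pf z))
       \<longrightarrow> canonical_on U (\<lambda>z. (Q_of H h t0 a (qf z) (Pf z), Pf z)))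
    \<and>
    (\<forall>(\<alpha>::real^'n) (\<beta>::real^'n) (x :: real \<Rightarrow> (real^'n) \<times> (real^'n)) (\<epsilon>::real).
       \<epsilon> > 0 \<and> x t0 = (\<alpha>, \<beta>) \<and>
       (\<forall>t\<in>ball t0 \<epsilon>. (x has_vector_derivative
           (dHp H (fst (x t)) (snd (x t)) t, - dHq H (fst (x t)) (snd (x t)) t)) (at t))
       \<longrightarrow> (\<exists>r>0. \<exists>\<delta>>0. \<exists>C. \<forall>h. 0 < h \<and> h < \<delta> \<longrightarrow>
              (\<exists>q P. dist q \<alpha> < r \<and> dist P \<beta> < r \<and>
                     q_eq H h t0 a \<alpha> \<beta> q \<and> P_eq H h t0 a \<beta> q P) \<and>
              (\<forall>q P. dist q \<alpha> < r \<and> dist P \<beta> < r \<and>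
                     q_eq H h t0 a \<alpha> \<beta> q \<and> P_eq H h t0 a \<beta> q P \<longrightarrow>
                     norm (Q_of H h t0 a q P - fst (x (t0 + h))) \<le> C * h^3 \<and>
                     norm (P - snd (x (t0 + h))) \<le> C * h^3)))"
proof -
  obtain H' H'' H''' where H_deriv: "\<And>y. ((\<lambda>(q, p, t). H q p t) has_derivative blinfun_apply (H' y)) (at y)"
    and H'_deriv: "\<And>y. (H' has_derivative blinfun_apply (H'' y)) (at y)"
    and H''_deriv: "\<And>y. (H'' has_derivative blinfun_apply (H''' y)) (at y)"
    and "continuous_on UNIV H'''"
    using assms unfolding C3_on_def C2_on_def C1_on_def by blast
  have H''_sym: "H'' y w v = H'' y v w" for y w v
    by (rule second_derivative_symmetric[OF H_deriv H'_deriv has_derivative_continuous[OF H''_deriv]])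
  show ?thesis
    by ((intro conjI allI impI; elim conjE),
        (rule scheme_canonical_on[OF H_deriv H'_deriv H''_sym]; assumption),
        (rule scheme_second_order[OF H_deriv H'_deriv H''_deriv \<open>continuous_on UNIV H'''\<close>]; blast))
qed

end
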